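(* Let $\|\cdot\|$ be a norm on $\mathbb{R}^d$ and $T:\mathbb{R}^d\to\mathbb{R}^d$ a $\gamma$-contraction, $\gamma\in(0,1)$, with unique fixed point $x^*$. Let $N\in\mathbb{N}$ be fixed, $x^0\in\mathbb{R}^d$, and $(x^n)$ generated by $x^n=(1-\beta_n)x^0+\beta_n(Tx^{n-1}+U_n)$ with $\beta_n=\frac{n}{n+1}$, where the random vectors $U_n$ satisfy, for some constant $\sigma>0$, $$\sigma_n^2\le\frac{\sigma^2}{n^2\gamma^{N-n}},\qquad \sigma_n:=\mathbb{E}(\|U_n\|),\quad n=1,\dots,N.$$ Then $\mathbb{E}(\|x^N-x^*\|)\le\dfrac{\|x^0-x^*\|+2\sigma}{(1-\gamma)(N+1)}$. *)

theory Defs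
  imports "HOL-Probability.Probability"
begin

definition is_norm :: "(real ^ 'd \<Rightarrow> real) \<Rightarrow> bool" where
  "is_norm nrm \<longleftrightarrow>
     (\<forall>x. 0 \<le> nrm x) \<and>
     (\<forall>x. nrm x = 0 \<longleftrightarrow> x = 0) \<and>
     (\<forall>c x. nrm (c *\<^sub>R x) = \<bar>c\<bar> * nrm x) \<and>
     (\<forall>x y. nrm (x + y) \<le> nrm x + nrm y)"

end

theory Submission
  imports Defs
begin

text \<open>
  Write \<open>e = nrm (x0 - xs)\<close> and \<open>s = sqrt \<gamma>\<close>. Multiplying the recursion by \<open>n + 1\<close> gives
  \<open>(n + 1)(x\<^sub>n - xs) = (x0 - xs) + n (T x\<^sub>n\<^sub>-\<^sub>1 - T xs) + n U\<^sub>n\<close>, so \<open>(n + 1) nrm (x\<^sub>n - xs)\<close>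
  is dominated pathwise by the sequence \<open>B\<^sub>0 = e\<close>, \<open>B\<^sub>n = e + \<gamma> B\<^sub>n\<^sub>-\<^sub>1 + n nrm U\<^sub>n\<close>, which only
  involves the noise and is therefore measurable. The noise hypothesis says \<open>n E nrm U\<^sub>n \<le> \<sigma> / s\<^sup>N\<^sup>-\<^sup>n\<close>,
  and by induction \<open>E B\<^sub>n \<le> e / (1 - \<gamma>) + 2 \<sigma> / ((1 - \<gamma>) s\<^sup>N\<^sup>-\<^sup>n)\<close>; the induction step reduces to
  \<open>2 s + 1 - s\<^sup>2 \<le> 2\<close>.
\<close>

lemma is_norm_nonneg: "is_norm nrm \<Longrightarrow> 0 \<le> nrm x"
  by (simp add: is_norm_def)

lemma is_norm_zero: "is_norm nrm \<Longrightarrow> nrm 0 = 0"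
  by (simp add: is_norm_def)

lemma is_norm_scaleR: "is_norm nrm \<Longrightarrow> nrm (c *\<^sub>R x) = \<bar>c\<bar> * nrm x"
  by (simp add: is_norm_def)

lemma is_norm_triangle: "is_norm nrm \<Longrightarrow> nrm (x + y) \<le> nrm x + nrm y"
  by (simp add: is_norm_def)

lemma is_norm_minus_commute:
  assumes "is_norm nrm"
  shows "nrm (a - b) = nrm (b - a)"
  using is_norm_scaleR[OF assms, of "-1" "b - a"] by simp

lemma is_norm_sum:
  assumes "is_norm nrm" "finite A"
  shows "nrm (sum f A) \<le> (\<Sum>i\<in>A. nrm (f i))"
  using assms(2)
proof (induction A rule: finite_induct)
  case empty
  then show ?case by (simp add: is_norm_zero[OF assms(1)])
next
  case (insert a A)
  then show ?case using is_norm_triangle[OF assms(1), of "f a" "sum f A"] by simp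
qed

lemma is_norm_le_norm:
  fixes nrm :: "real ^ 'd \<Rightarrow> real"
  assumes "is_norm nrm"
  obtains C where "0 \<le> C" "\<And>z. nrm z \<le> C * norm z"
proof
  let ?C = "\<Sum>i\<in>UNIV. nrm (axis i (1::real) :: real ^ 'd)"
  show "0 \<le> ?C" by (intro sum_nonneg) (simp add: is_norm_nonneg[OF assms])
  fix z :: "real ^ 'd"
  have "nrm z = nrm (\<Sum>i\<in>UNIV. (z$i) *\<^sub>R axis i 1)"
    using basis_expansion[of z] by (simp add: scalar_mult_eq_scaleR)
  also have "\<dots> \<le> (\<Sum>i\<in>UNIV. nrm ((z$i) *\<^sub>R axis i 1))"
    by (rule is_norm_sum[OF assms]) simp
  also have "\<dots> = (\<Sum>i\<in>UNIV. \<bar>z$i\<bar> * nrm (axis i 1 :: real ^ 'd))"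
    by (simp add: is_norm_scaleR[OF assms])
  also have "\<dots> \<le> (\<Sum>i\<in>UNIV. norm z * nrm (axis i 1 :: real ^ 'd))"
    by (intro sum_mono mult_right_mono) (auto simp: component_le_norm_cart is_norm_nonneg[OF assms])
  also have "\<dots> = ?C * norm z" by (simp add: sum_distrib_left mult.commute)
  finally show "nrm z \<le> ?C * norm z" .
qed

lemma is_norm_continuous_on:
  fixes nrm :: "real ^ 'd \<Rightarrow> real"
  assumes "is_norm nrm"
  shows "continuous_on UNIV nrm"
proof -
  obtain C where "0 \<le> C" and C: "\<And>z. nrm z \<le> C * norm z"
    using is_norm_le_norm[OF assms] by blast
  have "lipschitz_on C UNIV nrm"
  proof (rule lipschitz_onI)
    fix a b :: "real ^ 'd"
    have "\<bar>nrm a - nrm b\<bar> \<le> nrm (a - b)"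
      using is_norm_triangle[OF assms, of b "a - b"] is_norm_triangle[OF assms, of a "b - a"]
        is_norm_minus_commute[OF assms, of a b] by simp
    then show "dist (nrm a) (nrm b) \<le> C * dist a b"
      using C[of "a - b"] by (simp add: dist_real_def dist_norm)
  qed fact
  then show ?thesis by (rule lipschitz_on_continuous_on)
qed

lemma halpern_step_le:
  fixes nrm :: "real ^ 'd \<Rightarrow> real"
  assumes "is_norm nrm"
    and lip: "\<forall>y z. nrm (T y - T z) \<le> \<gamma> * nrm (y - z)" and "T xs = xs"
    and step: "x' = (1 - real n / real (n + 1)) *\<^sub>R x0 + (real n / real (n + 1)) *\<^sub>R (T x + u)"
  shows "real (n + 1) * nrm (x' - xs)
           \<le> nrm (x0 - xs) + \<gamma> * (real n * nrm (x - xs)) + real n * nrm u"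
proof -
  have "real (n + 1) * (1 - real n / real (n + 1)) = 1"
    and "real (n + 1) * (real n / real (n + 1)) = real n"
    by (simp_all add: field_simps)
  then have "real (n + 1) *\<^sub>R x' = x0 + real n *\<^sub>R (T x + u)"
    unfolding step scaleR_add_right scaleR_scaleR by simp
  then have eq: "real (n + 1) *\<^sub>R (x' - xs) = (x0 - xs) + real n *\<^sub>R (T x - T xs) + real n *\<^sub>R u"
    using \<open>T xs = xs\<close> by (simp add: algebra_simps)
  have "real (n + 1) * nrm (x' - xs) = nrm (real (n + 1) *\<^sub>R (x' - xs))"
    by (simp add: is_norm_scaleR[OF assms(1)])
  also have "\<dots> \<le> nrm (x0 - xs) + nrm (real n *\<^sub>R (T x - T xs)) + nrm (real n *\<^sub>R u)"
    unfolding eq using is_norm_triangle[OF assms(1)] by (meson add_mono order_trans order_refl)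
  also have "\<dots> = nrm (x0 - xs) + real n * nrm (T x - T xs) + real n * nrm u"
    by (simp add: is_norm_scaleR[OF assms(1)])
  also have "\<dots> \<le> nrm (x0 - xs) + real n * (\<gamma> * nrm (x - xs)) + real n * nrm u"
    using lip by (intro add_mono mult_left_mono) auto
  finally show ?thesis by (simp add: mult.left_commute)
qed

fun halpern_majorant :: "real \<Rightarrow> real \<Rightarrow> (nat \<Rightarrow> real) \<Rightarrow> nat \<Rightarrow> real" where
  "halpern_majorant e \<gamma> c 0 = e"
| "halpern_majorant e \<gamma> c (Suc n) = e + \<gamma> * halpern_majorant e \<gamma> c n + c (Suc n)"

lemma halpern_majorant_nonneg:
  "0 \<le> e \<Longrightarrow> 0 \<le> \<gamma> \<Longrightarrow> (\<And>m. 0 \<le> c m) \<Longrightarrow> 0 \<le> halpern_majorant e \<gamma> c n"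
  by (induction n) auto

lemma halpern_iterates_le_majorant:
  fixes nrm :: "real ^ 'd \<Rightarrow> real"
  assumes "is_norm nrm" "0 \<le> \<gamma>"
    and "\<forall>y z. nrm (T y - T z) \<le> \<gamma> * nrm (y - z)" and "T xs = xs"
    and "x 0 = x0"
    and step: "\<forall>n\<in>{1..N}. x n = (1 - real n / real (n + 1)) *\<^sub>R x0
                               + (real n / real (n + 1)) *\<^sub>R (T (x (n - 1)) + u n)"
    and "n \<le> N"
  shows "real (n + 1) * nrm (x n - xs)
           \<le> halpern_majorant (nrm (x0 - xs)) \<gamma> (\<lambda>m. real m * nrm (u m)) n"
  using \<open>n \<le> N\<close>
proof (induction n)
  case 0
  then show ?case using \<open>x 0 = x0\<close> by simp
next
  case (Suc n)
  have "real (Suc n + 1) * nrm (x (Suc n) - xs)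
          \<le> nrm (x0 - xs) + \<gamma> * (real (Suc n) * nrm (x n - xs)) + real (Suc n) * nrm (u (Suc n))"
    using step Suc.prems by (intro halpern_step_le[OF assms(1,3,4)]) auto
  also have "\<dots> \<le> nrm (x0 - xs) + \<gamma> * halpern_majorant (nrm (x0 - xs)) \<gamma> (\<lambda>m. real m * nrm (u m)) n
                  + real (Suc n) * nrm (u (Suc n))"
    using Suc \<open>0 \<le> \<gamma>\<close> by (intro add_mono mult_left_mono) auto
  finally show ?case by simp
qed

lemma borel_measurable_halpern_majorant:
  assumes "\<forall>m\<in>{1..n}. c m \<in> borel_measurable M"
  shows "(\<lambda>\<omega>. halpern_majorant e \<gamma> (\<lambda>m. c m \<omega>) n) \<in> borel_measurable M"
  using assms
proof (induction n)
  case (Suc n)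
  then have "(\<lambda>\<omega>. halpern_majorant e \<gamma> (\<lambda>m. c m \<omega>) n) \<in> borel_measurable M"
    and "c (Suc n) \<in> borel_measurable M"
    by auto
  then show ?case by simp
qed simp

lemma nn_integral_halpern_majorant_Suc:
  assumes "prob_space M" "0 \<le> e" "0 \<le> \<gamma>"
    and meas: "\<forall>m\<in>{1..Suc n}. c m \<in> borel_measurable M" and nonneg: "\<And>m \<omega>. 0 \<le> c m \<omega>"
  shows "(\<integral>\<^sup>+ \<omega>. halpern_majorant e \<gamma> (\<lambda>m. c m \<omega>) (Suc n) \<partial>M)
           = e + \<gamma> * (\<integral>\<^sup>+ \<omega>. halpern_majorant e \<gamma> (\<lambda>m. c m \<omega>) n \<partial>M) + (\<integral>\<^sup>+ \<omega>. c (Suc n) \<omega> \<partial>M)"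
proof -
  interpret prob_space M by fact
  let ?B = "\<lambda>\<omega>. halpern_majorant e \<gamma> (\<lambda>m. c m \<omega>) n"
  have B: "?B \<in> borel_measurable M"
    using meas by (intro borel_measurable_halpern_majorant) auto
  have "0 \<le> ?B \<omega>" for \<omega>
    using assms(2,3) nonneg by (rule halpern_majorant_nonneg)
  then have "ennreal (halpern_majorant e \<gamma> (\<lambda>m. c m \<omega>) (Suc n))
               = ennreal e + ennreal \<gamma> * ennreal (?B \<omega>) + ennreal (c (Suc n) \<omega>)" for \<omega>
    using assms(2,3) nonneg by (simp add: ennreal_plus ennreal_mult)
  then have "(\<integral>\<^sup>+ \<omega>. halpern_majorant e \<gamma> (\<lambda>m. c m \<omega>) (Suc n) \<partial>M)
               = (\<integral>\<^sup>+ \<omega>. ennreal e + ennreal \<gamma> * ennreal (?B \<omega>) + ennreal (c (Suc n) \<omega>) \<partial>M)"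
    by simp
  also have "\<dots> = (\<integral>\<^sup>+ \<omega>. ennreal e + ennreal \<gamma> * ennreal (?B \<omega>) \<partial>M) + (\<integral>\<^sup>+ \<omega>. c (Suc n) \<omega> \<partial>M)"
    using B meas by (intro nn_integral_add) (auto intro: measurable_compose[OF _ measurable_ennreal])
  also have "\<dots> = e + \<gamma> * (\<integral>\<^sup>+ \<omega>. ?B \<omega> \<partial>M) + (\<integral>\<^sup>+ \<omega>. c (Suc n) \<omega> \<partial>M)"
    using B by (simp add: nn_integral_add nn_integral_cmult emeasure_space_1)
  finally show ?thesis .
qed

lemma ennreal_le_of_power2_le:
  fixes I :: ennreal
  assumes "I ^ 2 \<le> ennreal (c ^ 2)" "0 \<le> c"
  shows "I \<le> ennreal c"
proof (cases I)
  case (real r)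
  then have "ennreal (r ^ 2) \<le> ennreal (c ^ 2)"
    using assms(1) by (simp only: ennreal_power)
  then have "r ^ 2 \<le> c ^ 2" using ennreal_le_iff[of "c^2" "r^2"] by simp
  then have "r \<le> c" using assms(2) by (rule power2_le_imp_le)
  then show ?thesis
    using real by (simp add: ennreal_leI)
next
  case top
  then have "top \<le> ennreal (c ^ 2)"
    using assms(1) power_top_ennreal[of 2] by simp
  then show ?thesis by (simp add: top_unique)
qed

lemma noise_weight_le:
  fixes I :: ennreal
  assumes "I ^ 2 \<le> ennreal (\<sigma> ^ 2 / (real m ^ 2 * \<gamma> ^ k))" "0 < \<gamma>" "0 \<le> \<sigma>"
  shows "ennreal (real m) * I \<le> ennreal (\<sigma> / sqrt \<gamma> ^ k)"
proof -
  define c where "c = \<sigma> / (real m * sqrt \<gamma> ^ k)"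
  have "0 \<le> c" using assms(2,3) by (simp add: c_def)
  have "(sqrt \<gamma> ^ k)\<^sup>2 = \<gamma> ^ k"
    using \<open>0 < \<gamma>\<close> by (simp flip: power_mult add: mult.commute[of k] power_mult)
  then have c2: "\<sigma> ^ 2 / (real m ^ 2 * \<gamma> ^ k) = c ^ 2"
    by (simp add: c_def power_divide power_mult_distrib)
  have "I \<le> ennreal c"
    using assms(1)[unfolded c2] \<open>0 \<le> c\<close> by (rule ennreal_le_of_power2_le)
  then have "ennreal (real m) * I \<le> ennreal (real m) * ennreal c"
    by (rule mult_left_mono) simp
  also have "\<dots> = ennreal (real m * c)"
    by (rule ennreal_mult'[symmetric]) simp
  also have "\<dots> \<le> ennreal (\<sigma> / sqrt \<gamma> ^ k)"
    using assms(2,3) by (intro ennreal_leI) (cases "m = 0", simp_all add: c_def)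
  finally show ?thesis .
qed

lemma halpern_bound_step:
  fixes s e \<sigma> :: real
  assumes "0 < s" "s < 1" "0 \<le> \<sigma>"
  shows "e + s\<^sup>2 * (e / (1 - s\<^sup>2) + 2 * \<sigma> / ((1 - s\<^sup>2) * s ^ Suc k)) + \<sigma> / s ^ k
           \<le> e / (1 - s\<^sup>2) + 2 * \<sigma> / ((1 - s\<^sup>2) * s ^ k)"
proof -
  define g where "g = 1 - s\<^sup>2"
  define t where "t = s ^ k"
  have "0 < g" "0 < t"
    using assms by (simp_all add: g_def t_def power_less_one_iff)
  have "e + s\<^sup>2 * (e / g + 2 * \<sigma> / (g * (s * t))) + \<sigma> / t = e / g + \<sigma> * (2 * s + g) / (g * t)"
    using \<open>0 < s\<close> \<open>0 < g\<close> \<open>0 < t\<close> g_def by (simp add: field_simps power2_eq_square) algebra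
  also have "\<dots> \<le> e / g + 2 * \<sigma> / (g * t)"
  proof -
    have "2 * s + g \<le> 2"
      using zero_le_power2[of "1 - s"] by (simp add: g_def power2_eq_square algebra_simps)
    then show ?thesis
      using \<open>0 \<le> \<sigma>\<close> \<open>0 < g\<close> \<open>0 < t\<close> by (simp add: divide_right_mono mult_left_mono mult.commute)
  qed
  finally show ?thesis
    unfolding g_def[symmetric] t_def[symmetric] power_Suc .
qed

lemma ennreal_recursion_bound:
  fixes a :: "nat \<Rightarrow> ennreal" and s e \<sigma> :: real
  assumes "0 < s" "s < 1" "0 \<le> e" "0 \<le> \<sigma>"
    and "a 0 \<le> e"
    and step: "\<And>n. n < N \<Longrightarrow> a (Suc n) \<le> e + s\<^sup>2 * a n + ennreal (\<sigma> / s ^ (N - Suc n))"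
  shows "a N \<le> ennreal ((e + 2 * \<sigma>) / (1 - s\<^sup>2))"
proof -
  define bnd where "bnd k = e / (1 - s\<^sup>2) + 2 * \<sigma> / ((1 - s\<^sup>2) * s ^ k)" for k
  have "0 < 1 - s\<^sup>2" using assms by (simp add: power_less_one_iff)
  then have bnd_nonneg: "0 \<le> bnd k" for k
    using assms by (simp add: bnd_def)
  have "a n \<le> bnd (N - n)" if "n \<le> N" for n
    using that
  proof (induction n)
    case 0
    have "e \<le> e / (1 - s\<^sup>2)"
      using \<open>0 \<le> e\<close> \<open>0 < 1 - s\<^sup>2\<close> by (simp add: le_divide_eq mult_left_le)
    then have "e \<le> bnd N"
      using assms \<open>0 < 1 - s\<^sup>2\<close> by (simp add: bnd_def add_increasing2)
    then show ?case using \<open>a 0 \<le> e\<close> by (simp add: ennreal_leI order_trans)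
  next
    case (Suc n)
    have "N - n = Suc (N - Suc n)" using Suc.prems by simp
    have "a (Suc n) \<le> e + s\<^sup>2 * a n + ennreal (\<sigma> / s ^ (N - Suc n))"
      using step Suc.prems by simp
    also have "\<dots> \<le> e + s\<^sup>2 * ennreal (bnd (N - n)) + ennreal (\<sigma> / s ^ (N - Suc n))"
      using Suc by (intro add_mono mult_left_mono order_refl) auto
    also have "\<dots> = ennreal (e + s\<^sup>2 * bnd (N - n) + \<sigma> / s ^ (N - Suc n))"
      using assms bnd_nonneg by (simp add: ennreal_plus ennreal_mult ennreal_power)
    also have "\<dots> \<le> bnd (N - Suc n)"
      unfolding bnd_def \<open>N - n = Suc (N - Suc n)\<close>
      using halpern_bound_step[OF assms(1,2,4)] by (rule ennreal_leI)
    finally show ?case .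
  qed
  from this[of N] show ?thesis by (simp add: bnd_def add_divide_distrib)
qed

lemma nn_integral_halpern_majorant_le:
  assumes "prob_space M" "0 < \<gamma>" "\<gamma> < 1" "0 \<le> e" "0 \<le> \<sigma>"
    and meas: "\<forall>m\<in>{1..N}. u m \<in> borel_measurable M" and nonneg: "\<And>m \<omega>. 0 \<le> u m \<omega>"
    and noise: "\<forall>m\<in>{1..N}. (\<integral>\<^sup>+ \<omega>. u m \<omega> \<partial>M) ^ 2 \<le> ennreal (\<sigma> ^ 2 / (real m ^ 2 * \<gamma> ^ (N - m)))"
  shows "(\<integral>\<^sup>+ \<omega>. halpern_majorant e \<gamma> (\<lambda>m. real m * u m \<omega>) N \<partial>M)
           \<le> ennreal ((e + 2 * \<sigma>) / (1 - \<gamma>))"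
proof -
  let ?B = "\<lambda>n. \<integral>\<^sup>+ \<omega>. halpern_majorant e \<gamma> (\<lambda>m. real m * u m \<omega>) n \<partial>M"
  have sq: "(sqrt \<gamma>)\<^sup>2 = \<gamma>" using \<open>0 < \<gamma>\<close> by simp
  have "?B N \<le> ennreal ((e + 2 * \<sigma>) / (1 - (sqrt \<gamma>)\<^sup>2))"
  proof (rule ennreal_recursion_bound)
    fix n assume "n < N"
    have "(\<integral>\<^sup>+ \<omega>. real (Suc n) * u (Suc n) \<omega> \<partial>M) = real (Suc n) * (\<integral>\<^sup>+ \<omega>. u (Suc n) \<omega> \<partial>M)"
      using meas \<open>n < N\<close> nonneg by (simp add: ennreal_mult nn_integral_cmult)
    also have "\<dots> \<le> ennreal (\<sigma> / sqrt \<gamma> ^ (N - Suc n))"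
      by (rule noise_weight_le) (use noise[rule_format, of "Suc n"] \<open>n < N\<close> assms(2,5) in auto)
    finally have noise_term: "(\<integral>\<^sup>+ \<omega>. real (Suc n) * u (Suc n) \<omega> \<partial>M) \<le> ennreal (\<sigma> / sqrt \<gamma> ^ (N - Suc n))" .
    have "?B (Suc n) = e + \<gamma> * ?B n + (\<integral>\<^sup>+ \<omega>. real (Suc n) * u (Suc n) \<omega> \<partial>M)"
      using assms(1,2,4) meas \<open>n < N\<close> nonneg
      by (intro nn_integral_halpern_majorant_Suc) (auto intro!: borel_measurable_times)
    then show "?B (Suc n) \<le> e + (sqrt \<gamma>)\<^sup>2 * ?B n + ennreal (\<sigma> / sqrt \<gamma> ^ (N - Suc n))"
      unfolding sq using add_left_mono[OF noise_term] by simp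
  qed (use assms in \<open>auto simp: prob_space.emeasure_space_1\<close>)
  then show ?thesis unfolding sq .
qed

theorem theorem4:
  fixes nrm :: "real ^ 'd \<Rightarrow> real"
    and T :: "real ^ 'd \<Rightarrow> real ^ 'd"
    and \<gamma> \<sigma> :: real
    and xs x0 :: "real ^ 'd"
    and N :: nat
    and M :: "'w measure"
    and U :: "nat \<Rightarrow> 'w \<Rightarrow> real ^ 'd"
    and x :: "nat \<Rightarrow> 'w \<Rightarrow> real ^ 'd"
  assumes "is_norm nrm"
    and "0 < \<gamma>" and "\<gamma> < 1"
    and "\<forall>y z. nrm (T y - T z) \<le> \<gamma> * nrm (y - z)"
    and "T xs = xs"
    and "\<forall>y. T y = y \<longrightarrow> y = xs"
    and "prob_space M"
    and "\<forall>n\<in>{1..N}. U n \<in> borel_measurable M"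
    and "0 < \<sigma>"
    and "\<forall>n\<in>{1..N}. (\<integral>\<^sup>+ \<omega>. ennreal (nrm (U n \<omega>)) \<partial>M) ^ 2
            \<le> ennreal (\<sigma> ^ 2 / (real n ^ 2 * \<gamma> ^ (N - n)))"
    and "\<forall>\<omega>. x 0 \<omega> = x0"
    and "\<forall>n\<in>{1..N}. \<forall>\<omega>. x n \<omega> =
            (1 - real n / real (n + 1)) *\<^sub>R x0
            + (real n / real (n + 1)) *\<^sub>R (T (x (n - 1) \<omega>) + U n \<omega>)"
  shows "(\<integral>\<^sup>+ \<omega>. ennreal (nrm (x N \<omega> - xs)) \<partial>M)
           \<le> ennreal ((nrm (x0 - xs) + 2 * \<sigma>) / ((1 - \<gamma>) * real (N + 1)))"
proof -
  define B where "B \<omega> = halpern_majorant (nrm (x0 - xs)) \<gamma> (\<lambda>m. real m * nrm (U m \<omega>)) N" for \<omega>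
  have pathwise: "nrm (x N \<omega> - xs) \<le> B \<omega> / real (N + 1)" for \<omega>
    using halpern_iterates_le_majorant[OF assms(1) _ assms(4,5), of "\<lambda>n. x n \<omega>" x0 N "\<lambda>n. U n \<omega>" N]
      assms(2,11,12) by (simp add: B_def field_simps)
  have noise_meas: "(\<lambda>\<omega>. nrm (U m \<omega>)) \<in> borel_measurable M" if "m \<in> {1..N}" for m
    using borel_measurable_continuous_on[OF is_norm_continuous_on[OF assms(1)]] assms(8) that by blast
  have B_meas: "B \<in> borel_measurable M"
    unfolding B_def using noise_meas by (intro borel_measurable_halpern_majorant) auto
  have EB: "(\<integral>\<^sup>+ \<omega>. B \<omega> \<partial>M) \<le> ennreal ((nrm (x0 - xs) + 2 * \<sigma>) / (1 - \<gamma>))"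
    unfolding B_def using assms(2,3,7,9,10) noise_meas
    by (intro nn_integral_halpern_majorant_le) (auto simp: is_norm_nonneg[OF assms(1)])
  have "(\<integral>\<^sup>+ \<omega>. nrm (x N \<omega> - xs) \<partial>M) \<le> (\<integral>\<^sup>+ \<omega>. ennreal (1 / real (N + 1)) * B \<omega> \<partial>M)"
    using pathwise by (intro nn_integral_mono) (simp add: ennreal_mult'[symmetric] ennreal_leI)
  also have "\<dots> = ennreal (1 / real (N + 1)) * (\<integral>\<^sup>+ \<omega>. B \<omega> \<partial>M)"
    using B_meas by (simp add: nn_integral_cmult)
  also have "\<dots> \<le> ennreal (1 / real (N + 1)) * ennreal ((nrm (x0 - xs) + 2 * \<sigma>) / (1 - \<gamma>))"
    using EB by (rule mult_left_mono) simp
  also have "\<dots> = ennreal ((nrm (x0 - xs) + 2 * \<sigma>) / ((1 - \<gamma>) * real (N + 1)))"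
    by (simp add: ennreal_mult'[symmetric] mult.commute)
  finally show ?thesis .
qed

end
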